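(* Let $m\in[0,1]$, $n=\sqrt{1-m^2}$, and for $k\in[-\pi,\pi]$ define $\omega=\arccos(n\cos k)\in[0,\pi]$, $\omega_{\rm D}=\sqrt{k^2+m^2}$, $v=\frac{n\sin k}{\sin\omega}$, $v_{\rm D}=\frac{k}{\sqrt{k^2+m^2}}$, $$\alpha(k,m)=\omega_{\rm D}-\omega,\qquad \beta(k,m)=1-v\,v_{\rm D}-\sqrt{(1-v^2)(1-v_{\rm D}^2)},$$ $$H(k)=\frac{\omega}{\sin\omega}\begin{pmatrix}-n\sin k & m\\ m & n\sin k\end{pmatrix},\qquad H_{\rm D}(k)=\begin{pmatrix}-k & m\\ m & k\end{pmatrix},$$ $V(k,t)=e^{-iH_{\rm D}(k)t}\,\big(e^{-iH(k)t}\big)^\dagger$, and let $\mu(k,m,t)\in[0,\pi]$ be such that the eigenvalues of the $SU(2)$ matrix $V(k,t)$ are $e^{\pm i\mu(k,m,t)}$. Let $0\le\bar k<\pi$, let $N$ be a positive integer, and put $$\bar\alpha=\max_{k\in[-\bar k,\bar k]}|\alpha(k,m)|,\qquad \bar\beta=\max_{k\in[-\bar k,\bar k]}|\beta(k,m)|,\qquad f(\bar k,m,N)=\frac{\arccos\!\big(\cos(\tfrac{\pi}{2N})+\bar\beta\big)}{\bar\alpha}.$$ If $\bar\beta\le 1-\cos(\tfrac{\pi}{2N})$ and $0\le t\le f(\bar k,m,N)$, then for every $k\in[-\bar k,\bar k]$ $$N\,\mu(k,m,t)\ \le\ g(\bar k,m,N,t)\ \le\ \frac{\pi}{2},\qquad\text{where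 } g(\bar k,m,N,t):=N\arccos\!\big(\cos(\bar\alpha t)-\bar\beta\big).$$
   Context: $H(k)$ is the momentum-space effective Hamiltonian of the one-dimensional Dirac quantum cellular automaton with mass parameter $m$, and $H_{\rm D}(k)$ the one-dimensional Dirac Hamiltonian in Planck units; both are traceless, so $V(k,t)\in SU(2)$. *)

theory Defs
  imports "HOL-Analysis.Analysis"
begin

type_synonym cmat2 = "complex^2^2"

definition mpow :: "cmat2 \<Rightarrow> nat \<Rightarrow> cmat2" where
  "mpow A j = (((**) A) ^^ j) (mat 1)"

definition mexp :: "cmat2 \<Rightarrow> cmat2" where
  "mexp A = (\<Sum>j. (1 / fact j :: real) *\<^sub>R mpow A j)"

definition adj :: "cmat2 \<Rightarrow> cmat2" where
  "adj A = (\<chi> i j. cnj (A $ j $ i))"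

definition mat2 :: "complex \<Rightarrow> complex \<Rightarrow> complex \<Rightarrow> complex \<Rightarrow> cmat2" where
  "mat2 a b c d = vector [vector [a, b], vector [c, d]]"

definition nn :: "real \<Rightarrow> real" where "nn m = sqrt (1 - m\<^sup>2)"
definition om :: "real \<Rightarrow> real \<Rightarrow> real" where "om k m = arccos (nn m * cos k)"
definition omD :: "real \<Rightarrow> real \<Rightarrow> real" where "omD k m = sqrt (k\<^sup>2 + m\<^sup>2)"
definition vel :: "real \<Rightarrow> real \<Rightarrow> real" where "vel k m = nn m * sin k / sin (om k m)"
definition velD :: "real \<Rightarrow> real \<Rightarrow> real" where "velD k m = k / sqrt (k\<^sup>2 + m\<^sup>2)"

definition alpha :: "real \<Rightarrow> real \<Rightarrow> real" where "alpha k m = omD k m - om k m"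
definition beta :: "real \<Rightarrow> real \<Rightarrow> real" where
  "beta k m = 1 - vel k m * velD k m - sqrt ((1 - (vel k m)\<^sup>2) * (1 - (velD k m)\<^sup>2))"

definition HQ :: "real \<Rightarrow> real \<Rightarrow> cmat2" where
  "HQ k m = (om k m / sin (om k m)) *\<^sub>R
     mat2 (- of_real (nn m * sin k)) (of_real m) (of_real m) (of_real (nn m * sin k))"
definition HD :: "real \<Rightarrow> real \<Rightarrow> cmat2" where
  "HD k m = mat2 (- of_real k) (of_real m) (of_real m) (of_real k)"

definition cscale :: "complex \<Rightarrow> cmat2 \<Rightarrow> cmat2" where
  "cscale c A = (\<chi> i j. c * A $ i $ j)"

definition Vmat :: "real \<Rightarrow> real \<Rightarrow> real \<Rightarrow> cmat2" where
  "Vmat k m t = mexp (cscale (- \<i> * of_real t) (HD k m)) ** adj (mexp (cscale (- \<i> * of_real t) (HQ k m)))"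

definition is_eigenvalue2 :: "cmat2 \<Rightarrow> complex \<Rightarrow> bool" where
  "is_eigenvalue2 A l \<longleftrightarrow> (\<exists>x. x \<noteq> 0 \<and> A *v x = l *s x)"

definition alpha_bar :: "real \<Rightarrow> real \<Rightarrow> real" where
  "alpha_bar kb m = (SUP k\<in>{-kb..kb}. \<bar>alpha k m\<bar>)"
definition beta_bar :: "real \<Rightarrow> real \<Rightarrow> real" where
  "beta_bar kb m = (SUP k\<in>{-kb..kb}. \<bar>beta k m\<bar>)"

definition gfun :: "real \<Rightarrow> real \<Rightarrow> nat \<Rightarrow> real \<Rightarrow> real" where
  "gfun kb m N t = real N * arccos (cos (alpha_bar kb m * t) - beta_bar kb m)"

end

theory Submission
  imports Defs
begin

text \<open>
  Both Hamiltonians have the form \<open>-x\<sigma>\<^sub>z + y\<sigma>\<^sub>x\<close>, whose square is \<open>(x\<^sup>2 + y\<^sup>2)\<close> times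
  the identity, so their exponentials are explicit matrices \<open>c + i(u\<sigma>\<^sub>z - v\<sigma>\<^sub>x)\<close> in
  \<open>SU(2)\<close>, and \<open>cos \<mu>\<close> is half the trace of their product:
  \<open>cos \<mu> = cos(\<omega>\<^sub>D t) cos(\<omega> t) + sin(\<omega>\<^sub>D t) sin(\<omega> t) (1 - \<beta>) = cos(\<alpha> t) - sin(\<omega>\<^sub>D t) sin(\<omega> t) \<beta>\<close>.
  Hence \<open>cos \<mu> \<ge> cos(alpha_bar t) - beta_bar\<close>, and the hypothesis on \<open>t\<close> keeps this lower
  bound above \<open>cos(\<pi>/2N)\<close>; as \<open>arccos\<close> is decreasing, \<open>\<mu> \<le> arccos(cos(alpha_bar t) - beta_bar) \<le> \<pi>/2N\<close>.
\<close>

lemma mat2_nth [simp]: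
  "mat2 a b c d $ 1 $ 1 = a" "mat2 a b c d $ 1 $ 2 = b"
  "mat2 a b c d $ 2 $ 1 = c" "mat2 a b c d $ 2 $ 2 = d"
  by (simp_all add: mat2_def)

lemma cmat2_eq_iff:
  "(A::cmat2) = B \<longleftrightarrow> A$1$1 = B$1$1 \<and> A$1$2 = B$1$2 \<and> A$2$1 = B$2$1 \<and> A$2$2 = B$2$2"
  by (simp add: vec_eq_iff forall_2)

lemma mat2_eta: "(A::cmat2) = mat2 (A$1$1) (A$1$2) (A$2$1) (A$2$2)"
  by (simp add: cmat2_eq_iff)

lemma mat2_mult:
  "mat2 a b c d ** mat2 e f g h = mat2 (a*e + b*g) (a*f + b*h) (c*e + d*g) (c*f + d*h)"
  by (simp add: cmat2_eq_iff matrix_matrix_mult_def sum_2)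

lemma mat2_one: "(mat 1 :: cmat2) = mat2 1 0 0 1"
  by (simp add: cmat2_eq_iff mat_def)

lemma mat2_adj: "adj (mat2 a b c d) = mat2 (cnj a) (cnj c) (cnj b) (cnj d)"
  by (simp add: cmat2_eq_iff adj_def)

lemma mat2_cscale: "cscale z (mat2 a b c d) = mat2 (z*a) (z*b) (z*c) (z*d)"
  by (simp add: cmat2_eq_iff cscale_def)

lemma mat2_mult_vec:
  "(mat2 a b c d *v x) $ 1 = a * x$1 + b * x$2" "(mat2 a b c d *v x) $ 2 = c * x$1 + d * x$2"
  by (simp_all add: matrix_vector_mult_def sum_2)

subsection \<open>Exponential of a complex structure\<close>

lemma mpow_Suc: "mpow A (Suc j) = A ** mpow A j"
  by (simp add: mpow_def)

lemma mpow_scaleR: "mpow (s *\<^sub>R A) j = s ^ j *\<^sub>R mpow A j"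
  by (induction j) (simp_all add: mpow_def matrix_scalar_ac scalar_matrix_assoc[symmetric])

lemma mpow_complex_structure:
  assumes "N ** N = - mat 1"
  shows "mpow N (2 * l) = (-1) ^ l *\<^sub>R mat 1" and "mpow N (Suc (2 * l)) = (-1) ^ l *\<^sub>R N"
proof -
  have two_steps: "mpow N (Suc (Suc j)) = - mpow N j" for j
  proof -
    have "mpow N (Suc (Suc j)) = ((-1::real) *\<^sub>R mat 1) ** mpow N j"
      by (simp add: mpow_Suc matrix_mul_assoc assms)
    then show ?thesis
      by (simp only: scalar_matrix_assoc[symmetric] matrix_mul_lid) simp
  qed
  show "mpow N (2 * l) = (-1) ^ l *\<^sub>R mat 1"
    by (induction l) (simp_all add: mpow_def[of N 0] two_steps)
  then show "mpow N (Suc (2 * l)) = (-1) ^ l *\<^sub>R N"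
    by (simp add: mpow_Suc matrix_scalar_ac)
qed

lemma mexp_scaleR_complex_structure:
  assumes "N ** N = - mat 1"
  shows "mexp (s *\<^sub>R N) = cos s *\<^sub>R mat 1 + sin s *\<^sub>R N"
proof -
  have term_split: "(1 / fact j :: real) *\<^sub>R mpow (s *\<^sub>R N) j
      = (cos_coeff j * s ^ j) *\<^sub>R mat 1 + (sin_coeff j * s ^ j) *\<^sub>R N" for j
  proof (cases "even j")
    case True
    then obtain l where "j = 2 * l" by blast
    then show ?thesis
      by (simp add: mpow_scaleR mpow_complex_structure[OF assms] cos_coeff_def sin_coeff_def)
  next
    case False
    then obtain l where "j = Suc (2 * l)" using oddE by fastforce
    then show ?thesis
      by (simp add: mpow_scaleR mpow_complex_structure[OF assms] cos_coeff_def sin_coeff_def)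
  qed
  have "(\<lambda>j. (cos_coeff j * s ^ j) *\<^sub>R (mat 1 :: cmat2) + (sin_coeff j * s ^ j) *\<^sub>R N)
          sums (cos s *\<^sub>R mat 1 + sin s *\<^sub>R N)"
    using sums_add[OF sums_scaleR_left[OF cos_converges] sums_scaleR_left[OF sin_converges]]
    by simp
  then show ?thesis
    unfolding mexp_def term_split by (rule sums_unique[symmetric])
qed

lemma mexp_zero [simp]: "mexp 0 = mat 1"
proof -
  have "mat2 \<i> 0 0 (- \<i>) ** mat2 \<i> 0 0 (- \<i>) = - mat 1"
    by (simp add: mat2_mult mat2_one cmat2_eq_iff)
  from mexp_scaleR_complex_structure[OF this, of 0] show ?thesis
    by simp
qed

subsection \<open>Unimodular matrices of the form \<open>c + i(u\<sigma>\<^sub>z - v\<sigma>\<^sub>x)\<close>\<close>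

definition su2 :: "real \<Rightarrow> real \<Rightarrow> real \<Rightarrow> cmat2" where
  "su2 c u v = mat2 (Complex c u) (Complex 0 (- v)) (Complex 0 (- v)) (Complex c (- u))"

lemma adj_su2: "adj (su2 c u v) = su2 c (- u) (- v)"
  by (simp add: su2_def mat2_adj complex_cnj)

lemma mexp_dirac_form:
  fixes x y \<tau> :: real
  defines "r \<equiv> sqrt (x\<^sup>2 + y\<^sup>2)"
  shows "mexp (cscale (- \<i> * \<tau>) (mat2 (- of_real x) (of_real y) (of_real y) (of_real x)))
           = su2 (cos (r * \<tau>)) (sin (r * \<tau>) * (x / r)) (sin (r * \<tau>) * (y / r))"
proof (cases "r = 0")
  case True
  then have "x = 0" "y = 0"
    by (auto simp: r_def sum_power2_eq_zero_iff)
  then have "cscale (- \<i> * \<tau>) (mat2 (- of_real x) (of_real y) (of_real y) (of_real x)) = 0"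
    by (simp add: cmat2_eq_iff mat2_cscale)
  then show ?thesis
    using True by (simp only: mexp_zero) (simp add: su2_def mat2_one cmat2_eq_iff complex_eq_iff)
next
  case False
  define N where "N = mat2 (\<i> * (x / r)) (- \<i> * (y / r)) (- \<i> * (y / r)) (- \<i> * (x / r))"
  have "(x / r)\<^sup>2 + (y / r)\<^sup>2 = 1"
    using False by (simp add: r_def power_divide add_divide_distrib[symmetric])
  then have unit: "complex_of_real (x / r) * (x / r) + (y / r) * (y / r) = 1"
    by (metis of_real_add of_real_1 of_real_mult power2_eq_square)
  have complex_structure: "N ** N = - mat 1"
    unfolding N_def mat2_mult mat2_one cmat2_eq_iff
    using unit by (simp add: algebra_simps)
  have "cscale (- \<i> * \<tau>) (mat2 (- of_real x) (of_real y) (of_real y) (of_real x)) = (r * \<tau>) *\<^sub>R N"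
    using False by (simp add: N_def cmat2_eq_iff cscale_def) (simp add: scaleR_conv_of_real)
  then have "mexp (cscale (- \<i> * \<tau>) (mat2 (- of_real x) (of_real y) (of_real y) (of_real x)))
      = cos (r * \<tau>) *\<^sub>R mat 1 + sin (r * \<tau>) *\<^sub>R N"
    by (simp only: mexp_scaleR_complex_structure[OF complex_structure])
  then show ?thesis
    by (simp only:) (simp add: N_def su2_def cmat2_eq_iff mat_def complex_eq_iff)
qed

lemma dirac_form_unit:
  fixes x y \<tau> :: real
  defines "r \<equiv> sqrt (x\<^sup>2 + y\<^sup>2)"
  shows "(cos (r * \<tau>))\<^sup>2 + (sin (r * \<tau>) * (x / r))\<^sup>2 + (sin (r * \<tau>) * (y / r))\<^sup>2 = 1"
proof (cases "r = 0")
  case False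
  then have "(x / r)\<^sup>2 + (y / r)\<^sup>2 = 1"
    by (simp add: r_def power_divide add_divide_distrib[symmetric])
  moreover have "(sin (r * \<tau>) * (x / r))\<^sup>2 + (sin (r * \<tau>) * (y / r))\<^sup>2
      = (sin (r * \<tau>))\<^sup>2 * ((x / r)\<^sup>2 + (y / r)\<^sup>2)"
    by (simp only: power_mult_distrib distrib_left)
  ultimately show ?thesis
    by (simp add: add.assoc)
qed simp

lemma is_eigenvalue2_char_poly:
  assumes "is_eigenvalue2 (mat2 p q r s) l"
  shows "(p - l) * (s - l) - q * r = 0"
proof -
  obtain x where "x \<noteq> 0" and x: "mat2 p q r s *v x = l *s x"
    using assms unfolding is_eigenvalue2_def by blast
  have row1: "(p - l) * x$1 + q * x$2 = 0" and row2: "r * x$1 + (s - l) * x$2 = 0"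
    using x mat2_mult_vec[of p q r s x] by (auto simp: vec_eq_iff forall_2 algebra_simps)
  have "((p - l) * (s - l) - q * r) * x$1 = (s - l) * ((p - l) * x$1 + q * x$2) - q * (r * x$1 + (s - l) * x$2)"
    and "((p - l) * (s - l) - q * r) * x$2 = (p - l) * (r * x$1 + (s - l) * x$2) - r * ((p - l) * x$1 + q * x$2)"
    by (simp_all add: algebra_simps)
  moreover have "x$1 \<noteq> 0 \<or> x$2 \<noteq> 0"
    using \<open>x \<noteq> 0\<close> by (simp add: vec_eq_iff forall_2)
  ultimately show ?thesis
    using row1 row2 by auto
qed

lemma cos_eq_half_trace_if_cis_eigenvalue:
  assumes "is_eigenvalue2 (mat2 p q r s) (cis \<mu>)"
    and "p + s = of_real T" and "p * s - q * r = 1"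
  shows "cos \<mu> = T / 2"
proof -
  have "(p - cis \<mu>) * (s - cis \<mu>) - q * r = 0"
    using assms(1) by (rule is_eigenvalue2_char_poly)
  then have "cis \<mu> * cis \<mu> - (p + s) * cis \<mu> + (p * s - q * r) = 0"
    by (simp add: algebra_simps)
  then have "(cis \<mu> * cis \<mu> - of_real T * cis \<mu> + 1) * cis (- \<mu>) = 0"
    using assms(2,3) by simp
  moreover have "cis \<mu> * cis (- \<mu>) = 1"
    by (simp add: cis_mult)
  ultimately have "cis \<mu> - of_real T + cis (- \<mu>) = 0"
    by (simp add: algebra_simps)
  then show ?thesis
    by (simp add: complex_eq_iff)
qed

lemma cos_eigenvalue_su2_mult:
  assumes "c\<^sup>2 + u\<^sup>2 + v\<^sup>2 = 1" and "c'\<^sup>2 + u'\<^sup>2 + v'\<^sup>2 = 1"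
    and "is_eigenvalue2 (su2 c u v ** su2 c' u' v') (cis \<mu>)"
  shows "cos \<mu> = c * c' - u * u' - v * v'"
proof -
  let ?A = "su2 c u v ** su2 c' u' v'"
  have "is_eigenvalue2 (mat2 (?A$1$1) (?A$1$2) (?A$2$1) (?A$2$2)) (cis \<mu>)"
    using assms(3) by (simp only: mat2_eta[symmetric])
  moreover have "?A$1$1 + ?A$2$2 = of_real (2 * (c * c' - u * u' - v * v'))"
    by (simp add: su2_def mat2_mult complex_eq_iff)
  moreover have "?A$1$1 * ?A$2$2 - ?A$1$2 * ?A$2$1
      = of_real ((c\<^sup>2 + u\<^sup>2 + v\<^sup>2) * (c'\<^sup>2 + u'\<^sup>2 + v'\<^sup>2))"
    by (simp add: su2_def mat2_mult complex_eq_iff power2_eq_square algebra_simps)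
  ultimately have "cos \<mu> = 2 * (c * c' - u * u' - v * v') / 2"
    using assms(1,2) by (intro cos_eq_half_trace_if_cis_eigenvalue) simp_all
  then show ?thesis
    by simp
qed

lemma cos_eigenphase_Vmat:
  fixes k m t \<mu> :: real
  defines "x \<equiv> nn m * sin k" and "\<tau> \<equiv> om k m / sin (om k m) * t"
  defines "r \<equiv> omD k m" and "r' \<equiv> sqrt (x\<^sup>2 + m\<^sup>2)"
  assumes "is_eigenvalue2 (Vmat k m t) (cis \<mu>)"
  shows "cos \<mu> = cos (r * t) * cos (r' * \<tau>)
           + sin (r * t) * sin (r' * \<tau>) * ((k / r) * (x / r') + (m / r) * (m / r'))"
proof -
  have "cscale (- \<i> * t) (HQ k m) = cscale (- \<i> * \<tau>) (mat2 (- of_real x) (of_real m) (of_real m) (of_real x))"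
    by (simp add: HQ_def x_def \<tau>_def cmat2_eq_iff cscale_def) (simp add: scaleR_conv_of_real)
  then have "Vmat k m t = su2 (cos (r * t)) (sin (r * t) * (k / r)) (sin (r * t) * (m / r))
      ** su2 (cos (r' * \<tau>)) (- (sin (r' * \<tau>) * (x / r'))) (- (sin (r' * \<tau>) * (m / r')))"
    unfolding Vmat_def HD_def r_def omD_def r'_def by (simp only: mexp_dirac_form adj_su2)
  then have "is_eigenvalue2 (su2 (cos (r * t)) (sin (r * t) * (k / r)) (sin (r * t) * (m / r))
      ** su2 (cos (r' * \<tau>)) (- (sin (r' * \<tau>) * (x / r'))) (- (sin (r' * \<tau>) * (m / r')))) (cis \<mu>)"
    using assms(5) by simp
  moreover have "(cos (r * t))\<^sup>2 + (sin (r * t) * (k / r))\<^sup>2 + (sin (r * t) * (m / r))\<^sup>2 = 1"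
    and "(cos (r' * \<tau>))\<^sup>2 + (- (sin (r' * \<tau>) * (x / r')))\<^sup>2 + (- (sin (r' * \<tau>) * (m / r')))\<^sup>2 = 1"
    unfolding r_def omD_def r'_def power2_minus by (rule dirac_form_unit)+
  ultimately have "cos \<mu> = cos (r * t) * cos (r' * \<tau>)
      - sin (r * t) * (k / r) * - (sin (r' * \<tau>) * (x / r'))
      - sin (r * t) * (m / r) * - (sin (r' * \<tau>) * (m / r'))"
    by (rule cos_eigenvalue_su2_mult[rotated 2])
  then show ?thesis
    by (simp add: algebra_simps)
qed

lemma nn_range:
  assumes "0 \<le> m" "m \<le> 1"
  shows "(nn m)\<^sup>2 = 1 - m\<^sup>2" "0 \<le> nn m" "nn m \<le> 1"
proof -
  have "m\<^sup>2 \<le> 1"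
    using assms by (simp add: power_le_one)
  then show "(nn m)\<^sup>2 = 1 - m\<^sup>2" "0 \<le> nn m" "nn m \<le> 1"
    unfolding nn_def by auto
qed

lemma abs_nn_cos_le_one:
  assumes "0 \<le> m" "m \<le> 1"
  shows "\<bar>nn m * cos k\<bar> \<le> 1"
  using nn_range[OF assms] abs_cos_le_one[of k] by (simp add: abs_mult mult_le_one)

lemma om_range:
  assumes "0 \<le> m" "m \<le> 1"
  shows "0 \<le> om k m" "om k m \<le> pi"
  using abs_nn_cos_le_one[OF assms, of k] unfolding om_def
  by (auto intro: arccos_lbound arccos_ubound simp: abs_le_iff)

lemma sin_om:
  assumes "0 \<le> m" "m \<le> 1"
  shows "sin (om k m) = sqrt ((nn m * sin k)\<^sup>2 + m\<^sup>2)"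
proof -
  have "(nn m * cos k)\<^sup>2 + (nn m * sin k)\<^sup>2 = (nn m)\<^sup>2"
    by (simp add: power_mult_distrib flip: distrib_left)
  then have "1 - (nn m * cos k)\<^sup>2 = (nn m * sin k)\<^sup>2 + m\<^sup>2"
    using nn_range(1)[OF assms] by linarith
  then show ?thesis
    unfolding om_def using sin_arccos_abs[OF abs_nn_cos_le_one[OF assms]] by simp
qed

lemma sin_om_nonzero:
  assumes "0 \<le> m" "m \<le> 1" "- pi < k" "k < pi" and "omD k m \<noteq> 0"
  shows "sin (om k m) \<noteq> 0"
proof
  assume "sin (om k m) = 0"
  then have "(nn m * sin k)\<^sup>2 + m\<^sup>2 = 0"
    using sin_om[OF assms(1,2), of k] real_sqrt_eq_0_iff by metis
  then have "nn m * sin k = 0 \<and> m = 0"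
    by (rule iffD1[OF sum_power2_eq_zero_iff])
  then have "m = 0" and "sin k = 0"
    by (auto simp: nn_def)
  then have "k = 0"
    using sin_eq_0_pi assms(3,4) by blast
  with \<open>m = 0\<close> assms(5) show False
    by (simp add: omD_def)
qed

lemma abs_inner_unit_vectors_le_one:
  fixes a b a' b' :: real
  assumes "a\<^sup>2 + b\<^sup>2 = 1" and "a'\<^sup>2 + b'\<^sup>2 = 1"
  shows "\<bar>a * a' + b * b'\<bar> \<le> 1"
proof -
  have "2 * \<bar>a * a'\<bar> \<le> a\<^sup>2 + a'\<^sup>2" and "2 * \<bar>b * b'\<bar> \<le> b\<^sup>2 + b'\<^sup>2"
    using sum_squares_bound[of "\<bar>a\<bar>" "\<bar>a'\<bar>"] sum_squares_bound[of "\<bar>b\<bar>" "\<bar>b'\<bar>"]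
    by (simp_all add: abs_mult)
  then show ?thesis
    using assms by linarith
qed

lemma velD_unit:
  assumes "omD k m \<noteq> 0"
  shows "(velD k m)\<^sup>2 + (m / omD k m)\<^sup>2 = 1"
  using assms by (simp add: velD_def omD_def power_divide add_divide_distrib[symmetric])

lemma vel_unit:
  assumes "0 \<le> m" "m \<le> 1" "- pi < k" "k < pi" and "omD k m \<noteq> 0"
  shows "(vel k m)\<^sup>2 + (m / sin (om k m))\<^sup>2 = 1"
proof -
  have "(vel k m)\<^sup>2 + (m / sin (om k m))\<^sup>2 = ((nn m * sin k)\<^sup>2 + m\<^sup>2) / (sin (om k m))\<^sup>2"
    by (simp add: vel_def power_divide add_divide_distrib)
  also have "\<dots> = 1"
    using sin_om[OF assms(1,2)] sin_om_nonzero[OF assms] by simp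
  finally show ?thesis .
qed

text \<open>
  The square root in \<open>\<beta>\<close> is the product of the nonnegative second coordinates of the unit
  vectors \<open>(v\<^sub>D, m/\<omega>\<^sub>D)\<close> and \<open>(v, m/sin \<omega>)\<close>.
\<close>

lemma beta_eq_one_minus_inner:
  assumes "0 \<le> m" "m \<le> 1" "- pi < k" "k < pi" and "omD k m \<noteq> 0"
  shows "beta k m = 1 - (velD k m * vel k m + (m / omD k m) * (m / sin (om k m)))"
proof -
  have "0 \<le> m / omD k m" and "0 \<le> m / sin (om k m)"
    using assms(1) by (simp_all add: omD_def sin_om[OF assms(1,2)])
  moreover have "1 - (vel k m)\<^sup>2 = (m / sin (om k m))\<^sup>2" and "1 - (velD k m)\<^sup>2 = (m / omD k m)\<^sup>2"
    using velD_unit[OF assms(5)] vel_unit[OF assms] by linarith+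
  then have "(1 - (vel k m)\<^sup>2) * (1 - (velD k m)\<^sup>2) = (m / sin (om k m) * (m / omD k m))\<^sup>2"
    by (simp only: power_mult_distrib)
  ultimately have "sqrt ((1 - (vel k m)\<^sup>2) * (1 - (velD k m)\<^sup>2)) = m / sin (om k m) * (m / omD k m)"
    by (metis real_sqrt_abs abs_of_nonneg mult_nonneg_nonneg)
  then show ?thesis
    unfolding beta_def by (simp add: algebra_simps)
qed

lemma abs_beta_le_two:
  assumes "0 \<le> m" "m \<le> 1" "- pi < k" "k < pi"
  shows "\<bar>beta k m\<bar> \<le> 2"
proof (cases "omD k m = 0")
  case True
  then have "k = 0" "m = 0"
    by (auto simp: omD_def sum_power2_eq_zero_iff)
  then show ?thesis
    \<comment> \<open>both velocities are \<open>0 / 0 = 0\<close> here, so \<open>\<beta> = 0\<close>\<close>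
    by (simp add: beta_def vel_def velD_def)
next
  case False
  show ?thesis
    using abs_inner_unit_vectors_le_one[OF velD_unit[OF False] vel_unit[OF assms False]]
      beta_eq_one_minus_inner[OF assms False]
    by linarith
qed

lemma cos_eigenphase_eq:
  assumes "0 \<le> m" "m \<le> 1" "- pi < k" "k < pi"
    and eig: "is_eigenvalue2 (Vmat k m t) (cis \<mu>)"
  shows "cos \<mu> = cos (alpha k m * t) - sin (omD k m * t) * sin (om k m * t) * beta k m"
proof (cases "omD k m = 0")
  case True
  then have "k = 0" "m = 0"
    by (auto simp: omD_def sum_power2_eq_zero_iff)
  then show ?thesis
    using cos_eigenphase_Vmat[OF eig] by (simp add: alpha_def omD_def om_def nn_def)
next
  case False
  have sin_om_nz: "sin (om k m) \<noteq> 0"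
    using sin_om_nonzero[OF assms(1-4) False] .
  have sqrt_eq: "sqrt ((nn m * sin k)\<^sup>2 + m\<^sup>2) = sin (om k m)"
    using sin_om[OF assms(1,2)] by simp
  have rescale: "sin (om k m) * (om k m / sin (om k m) * t) = om k m * t"
    using sin_om_nz by simp
  have "cos \<mu> = cos (omD k m * t) * cos (om k m * t) + sin (omD k m * t) * sin (om k m * t)
      * ((k / omD k m) * (nn m * sin k / sin (om k m)) + (m / omD k m) * (m / sin (om k m)))"
    using cos_eigenphase_Vmat[OF eig] unfolding sqrt_eq rescale .
  also have "\<dots> = cos (omD k m * t) * cos (om k m * t) + sin (omD k m * t) * sin (om k m * t)
      - sin (omD k m * t) * sin (om k m * t) * beta k m"
    unfolding beta_eq_one_minus_inner[OF assms(1-4) False] vel_def velD_def omD_def[symmetric]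
    by (simp add: algebra_simps)
  also have "\<dots> = cos (alpha k m * t) - sin (omD k m * t) * sin (om k m * t) * beta k m"
    unfolding alpha_def left_diff_distrib cos_diff ..
  finally show ?thesis .
qed

lemma cos_eigenphase_lower_bound:
  assumes "0 \<le> m" "m \<le> 1" "- pi < k" "k < pi"
    and "is_eigenvalue2 (Vmat k m t) (cis \<mu>)"
  shows "cos (alpha k m * t) - \<bar>beta k m\<bar> \<le> cos \<mu>"
proof -
  have "\<bar>sin (omD k m * t) * sin (om k m * t)\<bar> \<le> 1"
    unfolding abs_mult by (rule mult_le_one) simp_all
  then have "\<bar>sin (omD k m * t) * sin (om k m * t) * beta k m\<bar> \<le> \<bar>beta k m\<bar>"
    unfolding abs_mult[of _ "beta k m"] by (simp add: mult_left_le_one_le)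
  then show ?thesis
    using cos_eigenphase_eq[OF assms] by linarith
qed

lemma abs_alpha_le_alpha_bar:
  assumes "0 \<le> m" "m \<le> 1" and "k \<in> {-kb..kb}"
  shows "\<bar>alpha k m\<bar> \<le> alpha_bar kb m"
proof -
  have "\<bar>alpha k' m\<bar> \<le> kb + 1 + pi" if "k' \<in> {-kb..kb}" for k'
  proof -
    have "omD k' m \<le> \<bar>k'\<bar> + \<bar>m\<bar>"
      unfolding omD_def by (rule sqrt_sum_squares_le_sum_abs)
    moreover have "0 \<le> omD k' m"
      by (simp add: omD_def)
    ultimately show ?thesis
      using that assms(1,2) om_range[OF assms(1,2), of k'] by (auto simp: alpha_def abs_le_iff)
  qed
  then have "bdd_above ((\<lambda>k. \<bar>alpha k m\<bar>) ` {-kb..kb})"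
    by (intro bdd_aboveI2)
  then show ?thesis
    unfolding alpha_bar_def using assms(3) by (rule cSUP_upper2) simp
qed

lemma abs_beta_le_beta_bar:
  assumes "0 \<le> m" "m \<le> 1" "kb < pi" and "k \<in> {-kb..kb}"
  shows "\<bar>beta k m\<bar> \<le> beta_bar kb m"
proof -
  have "bdd_above ((\<lambda>k. \<bar>beta k m\<bar>) ` {-kb..kb})"
    using abs_beta_le_two[OF assms(1,2)] assms(3) by (intro bdd_aboveI2[where M = 2]) auto
  then show ?thesis
    unfolding beta_bar_def using assms(4) by (rule cSUP_upper2) simp
qed

lemma cos_sub_ge_if_le_arccos:
  fixes c b \<theta> :: real
  assumes "0 \<le> c" "0 \<le> b" "c + b \<le> 1" and "0 \<le> \<theta>" "\<theta> \<le> arccos (c + b)"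
  shows "c \<le> cos \<theta> - b"
proof -
  have "cos (arccos (c + b)) \<le> cos \<theta>"
    using assms by (intro cos_monotone_0_pi_le arccos_ubound) auto
  then show ?thesis
    using assms(1-3) by simp
qed

theorem lemma3:
  fixes m kb t :: real and N :: nat
  assumes "0 \<le> m" "m \<le> 1"
    and "0 \<le> kb" "kb < pi"
    and "N > 0"
    and "beta_bar kb m \<le> 1 - cos (pi / (2 * real N))"
    and "0 \<le> t"
    and "alpha_bar kb m * t \<le> arccos (cos (pi / (2 * real N)) + beta_bar kb m)"
  shows "\<forall>k \<in> {-kb..kb}. \<forall>\<mu>. 0 \<le> \<mu> \<and> \<mu> \<le> pi \<and>
           (\<forall>l. is_eigenvalue2 (Vmat k m t) l \<longleftrightarrow> l = cis \<mu> \<or> l = cis (- \<mu>)) \<longrightarrow>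
           real N * \<mu> \<le> gfun kb m N t \<and> gfun kb m N t \<le> pi / 2"
proof (intro ballI allI impI)
  fix k \<mu>
  assume k: "k \<in> {-kb..kb}"
    and "0 \<le> \<mu> \<and> \<mu> \<le> pi \<and> (\<forall>l. is_eigenvalue2 (Vmat k m t) l \<longleftrightarrow> l = cis \<mu> \<or> l = cis (- \<mu>))"
  then have \<mu>: "0 \<le> \<mu>" "\<mu> \<le> pi" and eig: "is_eigenvalue2 (Vmat k m t) (cis \<mu>)"
    by auto
  define c where "c = cos (pi / (2 * real N))"
  define w where "w = cos (alpha_bar kb m * t) - beta_bar kb m"
  have "0 < pi / (2 * real N)" "pi / (2 * real N) \<le> pi / 2"
    using assms(5) by (auto simp: field_simps)
  then have c: "0 \<le> c" "arccos c = pi / (2 * real N)"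
    unfolding c_def by (auto intro: cos_ge_zero simp: arccos_cos)
  have \<alpha>: "\<bar>alpha k m\<bar> \<le> alpha_bar kb m" and \<beta>: "\<bar>beta k m\<bar> \<le> beta_bar kb m"
    using abs_alpha_le_alpha_bar abs_beta_le_beta_bar assms(1,2,4) k by blast+
  have "\<bar>alpha k m\<bar> * t \<le> alpha_bar kb m * t"
    using \<alpha> assms(7) by (rule mult_right_mono)
  moreover have "alpha_bar kb m * t \<le> pi"
    using assms(6,8) c(1) \<beta> arccos_ubound[of "c + beta_bar kb m"] unfolding c_def by linarith
  ultimately have "cos (alpha_bar kb m * t) \<le> cos \<bar>alpha k m * t\<bar>"
    using assms(7) by (intro cos_monotone_0_pi_le) (simp_all add: abs_mult)
  then have "w \<le> cos \<mu>"
    using cos_eigenphase_lower_bound[OF assms(1,2) _ _ eig] k assms(4) \<beta> unfolding w_def by force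
  moreover have "c \<le> w"
    unfolding w_def c_def using c(1) \<beta> assms(6-8) \<alpha>
    by (intro cos_sub_ge_if_le_arccos) (auto simp: c_def intro: mult_nonneg_nonneg)
  ultimately have "\<mu> \<le> arccos w" and "arccos w \<le> pi / (2 * real N)"
    using \<mu> c arccos_le_arccos[of c w] arccos_le_arccos[of w "cos \<mu>"] cos_le_one[of \<mu>]
    by (auto simp: arccos_cos)
  moreover have "gfun kb m N t = real N * arccos w"
    by (simp add: gfun_def w_def)
  ultimately show "real N * \<mu> \<le> gfun kb m N t \<and> gfun kb m N t \<le> pi / 2"
    using assms(5) by (auto simp: field_simps mult_left_mono)
qed

end
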